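(* Writing $t^{\boldsymbol\mu}_{q,\sigma}$ for $t_\sigma$ computed with the potentials $\boldsymbol\psi_q^{\boldsymbol\mu}$, $$\lim_{q\to+\infty}\frac{-1}{q}\max_{\sigma\in\mathcal A}\sup_{\mathbf P_{\!\sigma}\in\mathcal Q^\sigma}t^{\boldsymbol\mu}_{q,\sigma}(\mathbf P_{\!\sigma})=\min_{\sigma\in\mathcal A}\inf_{\mathbf P_{\!\sigma}\in\mathcal Q^\sigma}S_\sigma(\mathbf P_{\!\sigma}),\qquad \lim_{q\to-\infty}\frac{-1}{q}\max_{\sigma\in\mathcal A}\sup_{\mathbf P_{\!\sigma}\in\mathcal Q^\sigma}t^{\boldsymbol\mu}_{q,\sigma}(\mathbf P_{\!\sigma})=\max_{\sigma\in\mathcal A}\sup_{\mathbf P_{\!\sigma}\in\mathcal Q^\sigma}S_\sigma(\mathbf P_{\!\sigma}).$$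
   Context: Setup: $d\ge1$, $\mathcal I=\{1,\dots,N\}$, affine maps $f_i$ with linear parts $\mathrm{diag}(a_i^{(1)},\dots,a_i^{(d)})$, $\lambda_i^{(n)}=|a_i^{(n)}|\in(0,1)$, no two distinct maps agree on $[0,1]^d$. For a permutation $\sigma$, $\Pi_n^\sigma$ = orthogonal projection onto the span of coordinate axes $\sigma_1,\dots,\sigma_n$; $f_i,f_j$ overlap exactly if $\Pi_n^\sigma f_i=\Pi_n^\sigma f_j$ on $[0,1]^d$; $\mathcal I_n^\sigma$ = smallest elements of classes, $\Pi_n^\sigma j$ = smallest element of class of $j$. $\mathcal A$ = set of permutations $\sigma$ for which some $\mathbf i\in\mathcal I^{\mathbb N}$, $\delta>0$ have $L_\delta(\mathbf i,\sigma_d)\le\dots\le L_\delta(\mathbf i,\sigma_1)$ (ties broken by $\sigma_n>\sigma_{n-1}$), $L_\delta(\mathbf i,n)$ the unique integer with $\prod_{\ell\le L_\delta(\mathbf i,n)}\lambda_{i_\ell}^{(n)}\le\delta<\prod_{\ell\le L_\delta(\mathbf i,n)-1}\lambda_{i_\ell}^{(n)}$. Variational: $\mathcal P_n^\sigma$ = probability vectors on $\mathcal I_n^\sigma$, $\mathcal P^\sigma=\mathcal P_d^\sigma\times\dots\times\mathcal P_1^\sigma$, elements $(\mathbf p_{\sigma_d},\dots,\mathbf p_{\sigma_1})$; $H$ Shannon entropy; $\chi_n^\sigma(\mathbf p_{\sigma_m})=-\sum_{i\in\mathcal I_m^\sigma}p_{\sigma_m}(i)\log\lambda_i^{(\sigma_n)}$;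 $C_d^{(d),\sigma}=1/\chi_d^\sigma(\mathbf p_{\sigma_d})$, $C_n^{(d),\sigma}=(1-\sum_{m>n}C_m^{(d),\sigma}\chi_n^\sigma(\mathbf p_{\sigma_m}))/\chi_n^\sigma(\mathbf p_{\sigma_n})$; $\mathcal Q^\sigma=\{\mathbf P_{\!\sigma}:C_n^{(d),\sigma}(\mathbf P_{\!\sigma})\ge0\ \forall n\}$. Measure: $\boldsymbol\mu$ strictly positive probability vector on $\mathcal I$, $\mu_n^\sigma(i)=\sum_{j:\Pi_n^\sigma j=i}\mu(j)$. $\boldsymbol\psi_q^{\boldsymbol\mu}=\{\psi^{\boldsymbol\mu,\sigma}_{q,n}\}$ with $\psi^{\boldsymbol\mu,\sigma}_{q,n}(i)=q\log\mu_n^\sigma(i)$, so $t^{\boldsymbol\mu}_{q,\sigma}(\mathbf P_{\!\sigma})=\sum_nC_n^{(d),\sigma}(\mathbf P_{\!\sigma})\big(H(\mathbf p_{\sigma_n})+q\sum_{i\in\mathcal I_n^\sigma}p_{\sigma_n}(i)\log\mu_n^\sigma(i)\big)$. $S_\sigma(\mathbf P_{\!\sigma})=-\sum_nC_n^{(d),\sigma}(\mathbf P_{\!\sigma})\sum_{i\in\mathcal I_n^\sigma}p_{\sigma_n}(i)\log\mu_n^\sigma(i)$. *)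

theory Defs
  imports "HOL-Combinatorics.Permutations" "HOL-Library.Extended_Real"
begin

text \<open>Maps are indexed by 1..N, coordinates by 1..d.
  a i c is the c-th diagonal entry of the linear part of f_i, t i c the c-th translation entry.\<close>

definition fmap :: "(nat \<Rightarrow> nat \<Rightarrow> real) \<Rightarrow> (nat \<Rightarrow> nat \<Rightarrow> real) \<Rightarrow> nat \<Rightarrow> (nat \<Rightarrow> real) \<Rightarrow> nat \<Rightarrow> real" where
  "fmap a t i x c = a i c * x c + t i c"

definition cube :: "nat \<Rightarrow> (nat \<Rightarrow> real) set" where
  "cube d = {x. \<forall>c\<in>{1..d}. 0 \<le> x c \<and> x c \<le> 1}"

definition overlap :: "nat \<Rightarrow> (nat \<Rightarrow> nat \<Rightarrow> real) \<Rightarrow> (nat \<Rightarrow> nat \<Rightarrow> real) \<Rightarrow> (nat \<Rightarrow> nat) \<Rightarrow> nat \<Rightarrow> nat \<Rightarrow> nat \<Rightarrow> bool" where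
  "overlap d a t \<sigma> n i j \<longleftrightarrow> (\<forall>x\<in>cube d. \<forall>k\<in>{1..n}. fmap a t i x (\<sigma> k) = fmap a t j x (\<sigma> k))"

definition projIdx :: "nat \<Rightarrow> nat \<Rightarrow> (nat \<Rightarrow> nat \<Rightarrow> real) \<Rightarrow> (nat \<Rightarrow> nat \<Rightarrow> real) \<Rightarrow> (nat \<Rightarrow> nat) \<Rightarrow> nat \<Rightarrow> nat \<Rightarrow> nat" where
  "projIdx d N a t \<sigma> n j = Min {k\<in>{1..N}. overlap d a t \<sigma> n k j}"

definition Iset :: "nat \<Rightarrow> nat \<Rightarrow> (nat \<Rightarrow> nat \<Rightarrow> real) \<Rightarrow> (nat \<Rightarrow> nat \<Rightarrow> real) \<Rightarrow> (nat \<Rightarrow> nat) \<Rightarrow> nat \<Rightarrow> nat set" where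
  "Iset d N a t \<sigma> n = {j\<in>{1..N}. projIdx d N a t \<sigma> n j = j}"

definition lam :: "(nat \<Rightarrow> nat \<Rightarrow> real) \<Rightarrow> nat \<Rightarrow> nat \<Rightarrow> real" where
  "lam a i n = \<bar>a i n\<bar>"

text \<open>L_delta(i, n); for 0 < delta < 1 this is the unique integer L with
  prod_{l<=L} lambda \<le> delta < prod_{l<=L-1} lambda.\<close>
definition Ldelta :: "(nat \<Rightarrow> nat \<Rightarrow> real) \<Rightarrow> (nat \<Rightarrow> nat) \<Rightarrow> real \<Rightarrow> nat \<Rightarrow> nat" where
  "Ldelta a ii \<delta> n = (LEAST L::nat. (\<Prod>l\<in>{1..L}. lam a (ii l) n) \<le> \<delta>)"

definition Aset :: "nat \<Rightarrow> nat \<Rightarrow> (nat \<Rightarrow> nat \<Rightarrow> real) \<Rightarrow> (nat \<Rightarrow> nat) set" where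
  "Aset d N a = {\<sigma>. \<sigma> permutes {1..d} \<and>
     (\<exists>ii \<delta>. (\<forall>l. ii l \<in> {1..N}) \<and> 0 < \<delta> \<and> \<delta> < 1 \<and>
        (\<forall>n\<in>{2..d}. Ldelta a ii \<delta> (\<sigma> n) < Ldelta a ii \<delta> (\<sigma> (n - 1)) \<or>
            (Ldelta a ii \<delta> (\<sigma> n) = Ldelta a ii \<delta> (\<sigma> (n - 1)) \<and> \<sigma> (n - 1) < \<sigma> n)))}"

text \<open>P n i = p_{sigma_n}(i): a probability vector on I_n^sigma for each n in 1..d.\<close>
definition Pset :: "nat \<Rightarrow> nat \<Rightarrow> (nat \<Rightarrow> nat \<Rightarrow> real) \<Rightarrow> (nat \<Rightarrow> nat \<Rightarrow> real) \<Rightarrow> (nat \<Rightarrow> nat) \<Rightarrow> (nat \<Rightarrow> nat \<Rightarrow> real) set" where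
  "Pset d N a t \<sigma> = {P. (\<forall>n\<in>{1..d}. (\<forall>i\<in>Iset d N a t \<sigma> n. 0 \<le> P n i)
        \<and> (\<Sum>i\<in>Iset d N a t \<sigma> n. P n i) = 1
        \<and> (\<forall>i. i \<notin> Iset d N a t \<sigma> n \<longrightarrow> P n i = 0))
      \<and> (\<forall>n. n \<notin> {1..d} \<longrightarrow> P n = (\<lambda>_. 0))}"

text \<open>chi d N a t sigma P n m = chi_n^sigma(p_{sigma_m}).\<close>
definition chi :: "nat \<Rightarrow> nat \<Rightarrow> (nat \<Rightarrow> nat \<Rightarrow> real) \<Rightarrow> (nat \<Rightarrow> nat \<Rightarrow> real) \<Rightarrow> (nat \<Rightarrow> nat) \<Rightarrow> (nat \<Rightarrow> nat \<Rightarrow> real) \<Rightarrow> nat \<Rightarrow> nat \<Rightarrow> real" where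
  "chi d N a t \<sigma> P n m = - (\<Sum>i\<in>Iset d N a t \<sigma> m. P m i * ln (lam a i (\<sigma> n)))"

function Ccoef :: "nat \<Rightarrow> (nat \<Rightarrow> nat \<Rightarrow> real) \<Rightarrow> nat \<Rightarrow> real" where
  "Ccoef d ch n = (if d < n then 0 else
      (1 - (\<Sum>m\<in>{n<..d}. Ccoef d ch m * ch n m)) / ch n n)"
  by auto
termination
  by (relation "measure (\<lambda>(d, ch, n). d - n)") auto

definition Cn :: "nat \<Rightarrow> nat \<Rightarrow> (nat \<Rightarrow> nat \<Rightarrow> real) \<Rightarrow> (nat \<Rightarrow> nat \<Rightarrow> real) \<Rightarrow> (nat \<Rightarrow> nat) \<Rightarrow> (nat \<Rightarrow> nat \<Rightarrow> real) \<Rightarrow> nat \<Rightarrow> real" where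
  "Cn d N a t \<sigma> P n = Ccoef d (chi d N a t \<sigma> P) n"

definition Qset :: "nat \<Rightarrow> nat \<Rightarrow> (nat \<Rightarrow> nat \<Rightarrow> real) \<Rightarrow> (nat \<Rightarrow> nat \<Rightarrow> real) \<Rightarrow> (nat \<Rightarrow> nat) \<Rightarrow> (nat \<Rightarrow> nat \<Rightarrow> real) set" where
  "Qset d N a t \<sigma> = {P\<in>Pset d N a t \<sigma>. \<forall>n\<in>{1..d}. 0 \<le> Cn d N a t \<sigma> P n}"

text \<open>Shannon entropy of p_{sigma_n} (ln 0 = 0 in Isabelle, so 0 log 0 = 0).\<close>
definition ent :: "nat \<Rightarrow> nat \<Rightarrow> (nat \<Rightarrow> nat \<Rightarrow> real) \<Rightarrow> (nat \<Rightarrow> nat \<Rightarrow> real) \<Rightarrow> (nat \<Rightarrow> nat) \<Rightarrow> (nat \<Rightarrow> nat \<Rightarrow> real) \<Rightarrow> nat \<Rightarrow> real" where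
  "ent d N a t \<sigma> P n = - (\<Sum>i\<in>Iset d N a t \<sigma> n. P n i * ln (P n i))"

definition muProj :: "nat \<Rightarrow> nat \<Rightarrow> (nat \<Rightarrow> nat \<Rightarrow> real) \<Rightarrow> (nat \<Rightarrow> nat \<Rightarrow> real) \<Rightarrow> (nat \<Rightarrow> real) \<Rightarrow> (nat \<Rightarrow> nat) \<Rightarrow> nat \<Rightarrow> nat \<Rightarrow> real" where
  "muProj d N a t \<mu> \<sigma> n i = (\<Sum>j\<in>{j\<in>{1..N}. projIdx d N a t \<sigma> n j = i}. \<mu> j)"

definition tq :: "nat \<Rightarrow> nat \<Rightarrow> (nat \<Rightarrow> nat \<Rightarrow> real) \<Rightarrow> (nat \<Rightarrow> nat \<Rightarrow> real) \<Rightarrow> (nat \<Rightarrow> real) \<Rightarrow> real \<Rightarrow> (nat \<Rightarrow> nat) \<Rightarrow> (nat \<Rightarrow> nat \<Rightarrow> real) \<Rightarrow> real" where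
  "tq d N a t \<mu> q \<sigma> P = (\<Sum>n\<in>{1..d}. Cn d N a t \<sigma> P n *
      (ent d N a t \<sigma> P n + q * (\<Sum>i\<in>Iset d N a t \<sigma> n. P n i * ln (muProj d N a t \<mu> \<sigma> n i))))"

definition Sfun :: "nat \<Rightarrow> nat \<Rightarrow> (nat \<Rightarrow> nat \<Rightarrow> real) \<Rightarrow> (nat \<Rightarrow> nat \<Rightarrow> real) \<Rightarrow> (nat \<Rightarrow> real) \<Rightarrow> (nat \<Rightarrow> nat) \<Rightarrow> (nat \<Rightarrow> nat \<Rightarrow> real) \<Rightarrow> real" where
  "Sfun d N a t \<mu> \<sigma> P = - (\<Sum>n\<in>{1..d}. Cn d N a t \<sigma> P n *
      (\<Sum>i\<in>Iset d N a t \<sigma> n. P n i * ln (muProj d N a t \<mu> \<sigma> n i)))"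

end

theory Submission
  imports Defs "HOL-Analysis.Extended_Real_Limits"
begin

text \<open>Write \<open>t\<^sub>q = H - q S\<close>, where \<open>H = \<Sum>\<^sub>n C\<^sub>n H(p\<^sub>n)\<close> is the entropy part.
  On \<open>\<Q>\<^sup>\<sigma>\<close> the coefficients satisfy \<open>0 \<le> C\<^sub>n \<le> 1/c\<close> with \<open>c = min (- log \<lambda>)\<close>, because
  \<open>C\<^sub>n\<close> is \<open>1\<close> minus a nonnegative quantity divided by \<open>\<chi>\<^sub>n(p\<^sub>n) \<ge> c\<close>; hence \<open>H\<close> is
  bounded by a constant \<open>B\<close> uniformly in \<open>\<sigma>\<close> and \<open>P\<close>. For \<open>q > 0\<close>, \<open>-t\<^sub>q/q = S - H/q\<close> lies
  within \<open>B/q\<close> of \<open>S\<close>, so \<open>-(1/q) sup t\<^sub>q = inf (S - H/q)\<close> tends to \<open>inf S\<close>.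
  The limit \<open>q \<rightarrow> -\<infinity>\<close> is the same statement applied to \<open>-S\<close>.\<close>

lemma SUP_Sigma:
  fixes f :: "_ \<Rightarrow> _ \<Rightarrow> _ :: complete_lattice"
  shows "(SUP i \<in> A. SUP j \<in> B i. f i j) = (SUP p \<in> Sigma A B. f (fst p) (snd p))"
  by (rule antisym) (auto intro!: SUP_least SUP_upper2)

lemma ereal_neg_mult_SUP:
  fixes f :: "'a \<Rightarrow> ereal"
  assumes "c < 0"
  shows "ereal c * (SUP i\<in>Y. f i) = (INF i\<in>Y. ereal c * f i)"
proof (cases "Y = {}")
  case True
  then show ?thesis using assms by (simp add: bot_ereal_def top_ereal_def)
next
  case False
  have neg: "ereal c * z = - (ereal (-c) * z)" for z by (cases z) auto
  show ?thesis
    unfolding neg ereal_INF_uminus_eq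
    using Sup_ereal_mult_left'[OF False, of "-c" f] assms by simp
qed

lemma INF_ereal_minus_le_INF:
  fixes f h :: "'a \<Rightarrow> real"
  assumes "\<And>x. x \<in> X \<Longrightarrow> f x \<le> h x + c"
  shows "(INF x\<in>X. ereal (f x)) - ereal c \<le> (INF x\<in>X. ereal (h x))"
proof (rule INF_greatest)
  fix x assume x: "x \<in> X"
  have "(INF x\<in>X. ereal (f x)) \<le> ereal (h x + c)"
    using INF_lower[OF x, of "\<lambda>x. ereal (f x)"] assms[OF x] by (meson ereal_less_eq(3) order_trans)
  then show "(INF x\<in>X. ereal (f x)) - ereal c \<le> ereal (h x)" by (simp add: ereal_minus_le)
qed

lemma tendsto_INF_ereal_uniform:
  fixes g :: "'b \<Rightarrow> 'a \<Rightarrow> real" and S :: "'a \<Rightarrow> real"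
  assumes close: "\<forall>\<^sub>F q in F. \<forall>x\<in>X. \<bar>g q x - S x\<bar> \<le> e q" and e: "(e \<longlongrightarrow> 0) F"
  shows "((\<lambda>q. INF x\<in>X. ereal (g q x)) \<longlongrightarrow> (INF x\<in>X. ereal (S x))) F"
proof (rule tendsto_sandwich)
  let ?L = "INF x\<in>X. ereal (S x)"
  show "\<forall>\<^sub>F q in F. ?L - ereal (e q) \<le> (INF x\<in>X. ereal (g q x))"
    using close by eventually_elim (rule INF_ereal_minus_le_INF, force)
  show "\<forall>\<^sub>F q in F. (INF x\<in>X. ereal (g q x)) \<le> ?L + ereal (e q)"
    using close
  proof eventually_elim
    case (elim q)
    then have "(INF x\<in>X. ereal (g q x)) - ereal (e q) \<le> ?L"
      by (intro INF_ereal_minus_le_INF) force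
    then show ?case by (simp add: ereal_minus_le)
  qed
  have e': "((\<lambda>q. ereal (e q)) \<longlongrightarrow> 0) F" using e by (simp add: zero_ereal_def)
  show "((\<lambda>q. ?L - ereal (e q)) \<longlongrightarrow> ?L) F"
    using tendsto_diff_ereal_general[OF tendsto_const e'] by simp
  show "((\<lambda>q. ?L + ereal (e q)) \<longlongrightarrow> ?L) F"
    using tendsto_add_ereal_general[OF _ tendsto_const e'] by simp
qed

lemma tendsto_neg_inverse_SUP_affine_at_top:
  fixes E S :: "'a \<Rightarrow> real"
  assumes "\<forall>x\<in>X. \<bar>E x\<bar> \<le> B"
  shows "((\<lambda>q. ereal (-1/q) * (SUP x\<in>X. ereal (E x - q * S x))) \<longlongrightarrow> (INF x\<in>X. ereal (S x))) at_top"
proof -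
  have "\<forall>\<^sub>F q in at_top. (INF x\<in>X. ereal (S x - E x / q)) = ereal (-1/q) * (SUP x\<in>X. ereal (E x - q * S x))"
    using eventually_gt_at_top[of "0::real"]
  proof eventually_elim
    case (elim q)
    then have "ereal (-1/q) * ereal (E x - q * S x) = ereal (S x - E x / q)" for x
      by (simp add: field_simps)
    then show ?case using elim by (simp add: ereal_neg_mult_SUP)
  qed
  moreover have "((\<lambda>q. INF x\<in>X. ereal (S x - E x / q)) \<longlongrightarrow> (INF x\<in>X. ereal (S x))) at_top"
  proof (rule tendsto_INF_ereal_uniform)
    show "\<forall>\<^sub>F q in at_top. \<forall>x\<in>X. \<bar>S x - E x / q - S x\<bar> \<le> B / q"
      using eventually_gt_at_top[of "0::real"]
    proof eventually_elim
      case (elim q)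
      show ?case
      proof
        fix x assume "x \<in> X"
        then have "\<bar>E x\<bar> / q \<le> B / q" using assms elim by (intro divide_right_mono) auto
        then show "\<bar>S x - E x / q - S x\<bar> \<le> B / q" using elim by simp
      qed
    qed
    show "((\<lambda>q. B / q) \<longlongrightarrow> 0) at_top"
      by (rule tendsto_divide_0[OF tendsto_const filterlim_at_top_imp_at_infinity[OF filterlim_ident]])
  qed
  ultimately show ?thesis by (rule Lim_transform_eventually[rotated])
qed

lemma tendsto_neg_inverse_SUP_affine_at_bot:
  fixes E S :: "'a \<Rightarrow> real"
  assumes "\<forall>x\<in>X. \<bar>E x\<bar> \<le> B"
  shows "((\<lambda>q. ereal (-1/q) * (SUP x\<in>X. ereal (E x - q * S x))) \<longlongrightarrow> (SUP x\<in>X. ereal (S x))) at_bot"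
proof -
  have "((\<lambda>r. ereal (-1/r) * (SUP x\<in>X. ereal (E x - r * - S x))) \<longlongrightarrow> (INF x\<in>X. ereal (- S x))) at_top"
    using tendsto_neg_inverse_SUP_affine_at_top[OF assms] .
  then have "((\<lambda>r. - (ereal (-1/r) * (SUP x\<in>X. ereal (E x - r * - S x)))) \<longlongrightarrow> - (INF x\<in>X. ereal (- S x))) at_top"
    by (rule tendsto_uminus_ereal)
  moreover have "- (INF x\<in>X. ereal (- S x)) = (SUP x\<in>X. ereal (S x))"
    using ereal_INF_uminus_eq[of "\<lambda>x. ereal (S x)" X] by simp
  moreover have "- (ereal (-1/r) * y) = ereal (-1 / - r) * y" for r y
    by (cases y) auto
  ultimately show ?thesis
    unfolding filterlim_at_bot_mirror by simp
qed

lemma abs_mult_ln_le_one: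
  fixes p :: real
  assumes "0 \<le> p" "p \<le> 1"
  shows "\<bar>p * ln p\<bar> \<le> 1"
proof (cases "p = 0")
  case False
  with assms have p: "0 < p" by simp
  have "- ln p \<le> 1 / p - 1"
    using ln_le_minus_one[of "1 / p"] p by (simp add: ln_div)
  then have "p * - ln p \<le> p * (1 / p - 1)"
    using p by (intro mult_left_mono) auto
  also have "\<dots> = 1 - p"
    using p by (simp add: field_simps)
  finally have "- (p * ln p) \<le> 1" using p by simp
  moreover have "p * ln p \<le> 0"
    using p assms by (simp add: mult_nonneg_nonpos)
  ultimately show ?thesis by simp
qed simp

lemma Iset_subset: "Iset d N a t \<sigma> n \<subseteq> {1..N}"
  unfolding Iset_def by auto

lemma finite_Iset: "finite (Iset d N a t \<sigma> n)"
  using finite_subset[OF Iset_subset] by blast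

lemma Pset_sum:
  assumes "P \<in> Pset d N a t \<sigma>" "n \<in> {1..d}"
  shows "(\<Sum>i\<in>Iset d N a t \<sigma> n. P n i) = 1"
  using assms unfolding Pset_def by auto

lemma Pset_nonneg:
  assumes "P \<in> Pset d N a t \<sigma>" "n \<in> {1..d}" "i \<in> Iset d N a t \<sigma> n"
  shows "0 \<le> P n i"
  using assms unfolding Pset_def by auto

lemma Pset_le_one:
  assumes "P \<in> Pset d N a t \<sigma>" "n \<in> {1..d}" "i \<in> Iset d N a t \<sigma> n"
  shows "P n i \<le> 1"
proof -
  have "P n i \<le> (\<Sum>j\<in>Iset d N a t \<sigma> n. P n j)"
    using assms Pset_nonneg[OF assms(1,2)] by (intro member_le_sum finite_Iset) auto
  then show ?thesis using Pset_sum[OF assms(1,2)] by simp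
qed

lemma abs_ent_le:
  assumes "P \<in> Pset d N a t \<sigma>" "n \<in> {1..d}"
  shows "\<bar>ent d N a t \<sigma> P n\<bar> \<le> real N"
proof -
  have "\<bar>ent d N a t \<sigma> P n\<bar> \<le> (\<Sum>i\<in>Iset d N a t \<sigma> n. \<bar>P n i * ln (P n i)\<bar>)"
    unfolding ent_def abs_minus_cancel by (rule sum_abs)
  also have "\<dots> \<le> (\<Sum>i\<in>Iset d N a t \<sigma> n. 1)"
    using Pset_nonneg[OF assms] Pset_le_one[OF assms] by (intro sum_mono abs_mult_ln_le_one)
  also have "\<dots> = real (card (Iset d N a t \<sigma> n))"
    by simp
  also have "\<dots> \<le> real N"
    using card_mono[OF _ Iset_subset] by simp
  finally show ?thesis .
qed

lemma uniform_log_contraction: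
  assumes "\<forall>i\<in>{1..N}. \<forall>k\<in>{1..d}. 0 < \<bar>a i k\<bar> \<and> \<bar>a i k\<bar> < 1"
  obtains c where "0 < c" "\<forall>i\<in>{1..N}. \<forall>k\<in>{1..d}. c \<le> - ln (lam a i k)"
proof
  let ?K = "insert 1 ((\<lambda>(i, k). - ln (lam a i k)) ` ({1..N} \<times> {1..d}))"
  have "0 < x" if "x \<in> ?K" for x
    using that assms by (auto simp: lam_def)
  then show "0 < Min ?K" by simp
  show "\<forall>i\<in>{1..N}. \<forall>k\<in>{1..d}. Min ?K \<le> - ln (lam a i k)"
  proof (intro ballI)
    fix i k assume "i \<in> {1..N}" "k \<in> {1..d}"
    then have "- ln (lam a i k) \<in> ?K" by force
    then show "Min ?K \<le> - ln (lam a i k)" by (simp add: Min_le)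
  qed
qed

lemma chi_ge:
  assumes "P \<in> Pset d N a t \<sigma>" "m \<in> {1..d}" "\<sigma> n \<in> {1..d}"
    and c: "\<forall>i\<in>{1..N}. \<forall>k\<in>{1..d}. c \<le> - ln (lam a i k)"
  shows "c \<le> chi d N a t \<sigma> P n m"
proof -
  have "c = (\<Sum>i\<in>Iset d N a t \<sigma> m. P m i * c)"
    using Pset_sum[OF assms(1,2)] by (simp add: sum_distrib_right[symmetric])
  also have "\<dots> \<le> (\<Sum>i\<in>Iset d N a t \<sigma> m. P m i * - ln (lam a i (\<sigma> n)))"
  proof (intro sum_mono mult_left_mono)
    fix i assume i: "i \<in> Iset d N a t \<sigma> m"
    then show "0 \<le> P m i" by (rule Pset_nonneg[OF assms(1,2)])
    show "c \<le> - ln (lam a i (\<sigma> n))"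
      using c assms(3) subsetD[OF Iset_subset i] by blast
  qed
  also have "\<dots> = chi d N a t \<sigma> P n m"
    unfolding chi_def by (simp add: sum_negf)
  finally show ?thesis .
qed

lemma Cn_recurrence:
  assumes "n \<le> d"
  shows "Cn d N a t \<sigma> P n =
    (1 - (\<Sum>m\<in>{n<..d}. Cn d N a t \<sigma> P m * chi d N a t \<sigma> P n m)) / chi d N a t \<sigma> P n n"
  unfolding Cn_def using assms by (subst Ccoef.simps) (simp del: Ccoef.simps)

lemma Cn_le_inverse:
  assumes P: "P \<in> Qset d N a t \<sigma>" and n: "n \<in> {1..d}" and \<sigma>: "\<sigma> permutes {1..d}"
    and "0 < c" and c: "\<forall>i\<in>{1..N}. \<forall>k\<in>{1..d}. c \<le> - ln (lam a i k)"
  shows "Cn d N a t \<sigma> P n \<le> 1 / c"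
proof -
  have PP: "P \<in> Pset d N a t \<sigma>" and C_nonneg: "\<forall>m\<in>{1..d}. 0 \<le> Cn d N a t \<sigma> P m"
    using P unfolding Qset_def by auto
  have \<sigma>n: "\<sigma> n \<in> {1..d}" using n permutes_in_image[OF \<sigma>] by blast
  let ?chi = "chi d N a t \<sigma> P"
  have chi_nn: "c \<le> ?chi n n" using chi_ge[OF PP n \<sigma>n c] .
  have "0 \<le> (\<Sum>m\<in>{n<..d}. Cn d N a t \<sigma> P m * ?chi n m)"
  proof (intro sum_nonneg mult_nonneg_nonneg)
    fix m assume "m \<in> {n<..d}"
    then have m: "m \<in> {1..d}" using n by auto
    show "0 \<le> Cn d N a t \<sigma> P m" using C_nonneg m by blast
    show "0 \<le> ?chi n m" using chi_ge[OF PP m \<sigma>n c] \<open>0 < c\<close> by linarith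
  qed
  then have "(1 - (\<Sum>m\<in>{n<..d}. Cn d N a t \<sigma> P m * ?chi n m)) / ?chi n n \<le> 1 / ?chi n n"
    using chi_nn \<open>0 < c\<close> by (intro divide_right_mono) auto
  moreover have "Cn d N a t \<sigma> P n = (1 - (\<Sum>m\<in>{n<..d}. Cn d N a t \<sigma> P m * ?chi n m)) / ?chi n n"
    using n by (intro Cn_recurrence) simp
  ultimately have "Cn d N a t \<sigma> P n \<le> 1 / ?chi n n" by simp
  also have "\<dots> \<le> 1 / c"
    using chi_nn \<open>0 < c\<close> by (intro divide_left_mono) auto
  finally show ?thesis .
qed

definition entropy_term :: "nat \<Rightarrow> nat \<Rightarrow> (nat \<Rightarrow> nat \<Rightarrow> real) \<Rightarrow> (nat \<Rightarrow> nat \<Rightarrow> real) \<Rightarrow> (nat \<Rightarrow> nat) \<Rightarrow> (nat \<Rightarrow> nat \<Rightarrow> real) \<Rightarrow> real" where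
  "entropy_term d N a t \<sigma> P = (\<Sum>n\<in>{1..d}. Cn d N a t \<sigma> P n * ent d N a t \<sigma> P n)"

lemma tq_eq_entropy_term_minus_Sfun:
  "tq d N a t \<mu> q \<sigma> P = entropy_term d N a t \<sigma> P - q * Sfun d N a t \<mu> \<sigma> P"
  unfolding tq_def entropy_term_def Sfun_def
  by (simp add: distrib_left sum.distrib sum_distrib_left algebra_simps)

lemma abs_entropy_term_le:
  assumes P: "P \<in> Qset d N a t \<sigma>" and \<sigma>: "\<sigma> permutes {1..d}"
    and "0 < c" and c: "\<forall>i\<in>{1..N}. \<forall>k\<in>{1..d}. c \<le> - ln (lam a i k)"
  shows "\<bar>entropy_term d N a t \<sigma> P\<bar> \<le> real d * real N / c"
proof -
  have "\<bar>entropy_term d N a t \<sigma> P\<bar> \<le> (\<Sum>n\<in>{1..d}. \<bar>Cn d N a t \<sigma> P n * ent d N a t \<sigma> P n\<bar>)"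
    unfolding entropy_term_def by (rule sum_abs)
  also have "\<dots> \<le> (\<Sum>n\<in>{1..d}. 1 / c * real N)"
  proof (rule sum_mono)
    fix n assume n: "n \<in> {1..d}"
    have "0 \<le> Cn d N a t \<sigma> P n" using P n unfolding Qset_def by auto
    moreover have "\<bar>ent d N a t \<sigma> P n\<bar> \<le> real N"
      using P n unfolding Qset_def by (auto intro: abs_ent_le)
    ultimately show "\<bar>Cn d N a t \<sigma> P n * ent d N a t \<sigma> P n\<bar> \<le> 1 / c * real N"
      unfolding abs_mult using Cn_le_inverse[OF P n \<sigma> \<open>0 < c\<close> c] \<open>0 < c\<close>
      by (intro mult_mono) auto
  qed
  also have "\<dots> = real d * real N / c" by simp
  finally show ?thesis .
qed

theorem lemma8p2:
  fixes d N :: nat and a t :: "nat \<Rightarrow> nat \<Rightarrow> real" and \<mu> :: "nat \<Rightarrow> real"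
  assumes "1 \<le> d" and "1 \<le> N"
    and "\<forall>i\<in>{1..N}. \<forall>n\<in>{1..d}. 0 < \<bar>a i n\<bar> \<and> \<bar>a i n\<bar> < 1"
    and "\<forall>i\<in>{1..N}. \<forall>j\<in>{1..N}. i \<noteq> j \<longrightarrow>
           (\<exists>x\<in>cube d. \<exists>c\<in>{1..d}. fmap a t i x c \<noteq> fmap a t j x c)"
    and "\<forall>i\<in>{1..N}. 0 < \<mu> i" and "(\<Sum>i\<in>{1..N}. \<mu> i) = 1"
  shows "((\<lambda>q. ereal (-1 / q) * (SUP \<sigma>\<in>Aset d N a. SUP P\<in>Qset d N a t \<sigma>. ereal (tq d N a t \<mu> q \<sigma> P)))
            \<longlongrightarrow> (INF \<sigma>\<in>Aset d N a. INF P\<in>Qset d N a t \<sigma>. ereal (Sfun d N a t \<mu> \<sigma> P))) at_top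
       \<and> ((\<lambda>q. ereal (-1 / q) * (SUP \<sigma>\<in>Aset d N a. SUP P\<in>Qset d N a t \<sigma>. ereal (tq d N a t \<mu> q \<sigma> P)))
            \<longlongrightarrow> (SUP \<sigma>\<in>Aset d N a. SUP P\<in>Qset d N a t \<sigma>. ereal (Sfun d N a t \<mu> \<sigma> P))) at_bot"
proof -
  obtain c where "0 < c" and c: "\<forall>i\<in>{1..N}. \<forall>k\<in>{1..d}. c \<le> - ln (lam a i k)"
    using uniform_log_contraction[OF assms(3)] by blast
  let ?X = "Sigma (Aset d N a) (Qset d N a t)"
  let ?E = "\<lambda>x. entropy_term d N a t (fst x) (snd x)"
  let ?S = "\<lambda>x. Sfun d N a t \<mu> (fst x) (snd x)"
  have "\<forall>x\<in>?X. \<bar>?E x\<bar> \<le> real d * real N / c"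
    using abs_entropy_term_le[OF _ _ \<open>0 < c\<close> c] by (auto simp: Aset_def)
  then show ?thesis
    unfolding tq_eq_entropy_term_minus_Sfun SUP_Sigma INF_Sigma
    using tendsto_neg_inverse_SUP_affine_at_top[where S = ?S]
      tendsto_neg_inverse_SUP_affine_at_bot[where S = ?S] by simp
qed

end
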